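(* Let $A$ be a physical system of dimension $m$ whose Hamiltonian has a non-degenerate Bohr spectrum, with energy eigenbasis $\{|x\rangle\}$ and Gibbs state $\gamma^A$. Let $\rho,\sigma$ be states on $A$ with $r_{xy}\coloneqq\langle x|\rho|y\rangle$, $s_{xy}\coloneqq\langle x|\sigma|y\rangle$. Suppose $r_{xy}\neq0$ for all $x,y\in[m]$ and $r_{xx}=s_{xx}$ for all $x\in[m]$. Then there exists $\mathcal{E}\in\mathrm{GPC}(A\to A)$ with $\mathcal{E}(\rho)=\sigma$ if and only if $$Q^A\coloneqq I^A+\sum_{x\neq y\in[m]}\frac{s_{xy}}{r_{xy}}|x\rangle\langle y|^A\geq0.$$
   Context: The Hamiltonian $H^A=\sum_x a_x|x\rangle\langle x|$ has a non-degenerate Bohr spectrum if for all $x,y,x',y'$: $a_x-a_y=a_{x'}-a_{y'}$ holds iff ($x=x'$ and $y=y'$) or ($x=y$ and $x'=y'$). For fixed inverse temperature $\beta>0$ the Gibbs state is $\gamma^A=e^{-\beta H^A}/\mathrm{Tr}[e^{-\beta H^A}]$. $\mathrm{GPC}(A\to A)$ is the set of quantum channels $\mathcal{E}:A\to A$ with $\mathcal{E}(\gamma^A)=\gamma^A$ and $\mathcal{E}(e^{-iH^At}\rho e^{iH^At})=e^{-iH^At}\mathcal{E}(\rho)e^{iH^At}$ for all $t\in\mathbb{R}$ and states $\rho$. *)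

theory Defs
  imports Complex_Main
begin

text \<open>Matrices on a finite index set are represented as functions of two indices
  (entries outside the relevant index range are irrelevant). For a system A of
  dimension m the basis is the energy eigenbasis, indexed by {..<m}.\<close>

type_synonym 'i cmat = "'i \<Rightarrow> 'i \<Rightarrow> complex"

definition psd_on :: "'i set \<Rightarrow> 'i cmat \<Rightarrow> bool" where
  "psd_on S M \<longleftrightarrow> (\<forall>v :: 'i \<Rightarrow> complex.
      Im (\<Sum>p\<in>S. \<Sum>q\<in>S. cnj (v p) * M p q * v q) = 0 \<and>
      Re (\<Sum>p\<in>S. \<Sum>q\<in>S. cnj (v p) * M p q * v q) \<ge> 0)"

definition is_state :: "nat \<Rightarrow> nat cmat \<Rightarrow> bool" where
  "is_state m \<rho> \<longleftrightarrow> psd_on {..<m} \<rho> \<and> (\<Sum>x<m. \<rho> x x) = 1"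

definition mat_eq_on :: "nat \<Rightarrow> nat cmat \<Rightarrow> nat cmat \<Rightarrow> bool" where
  "mat_eq_on m X Y \<longleftrightarrow> (\<forall>x<m. \<forall>y<m. X x y = Y x y)"

definition well_defined_on :: "nat \<Rightarrow> (nat cmat \<Rightarrow> nat cmat) \<Rightarrow> bool" where
  "well_defined_on m E \<longleftrightarrow> (\<forall>X Y. mat_eq_on m X Y \<longrightarrow> mat_eq_on m (E X) (E Y))"

definition linear_on :: "nat \<Rightarrow> (nat cmat \<Rightarrow> nat cmat) \<Rightarrow> bool" where
  "linear_on m E \<longleftrightarrow> (\<forall>X Y (a::complex) b. mat_eq_on m
      (E (\<lambda>i j. a * X i j + b * Y i j)) (\<lambda>i j. a * E X i j + b * E Y i j))"

definition trace_preserving :: "nat \<Rightarrow> (nat cmat \<Rightarrow> nat cmat) \<Rightarrow> bool" where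
  "trace_preserving m E \<longleftrightarrow> (\<forall>X. (\<Sum>x<m. E X x x) = (\<Sum>x<m. X x x))"

text \<open>(id_k \<otimes> E) applied to a block matrix indexed by pairs (ancilla index, system index).\<close>
definition id_tensor :: "(nat cmat \<Rightarrow> nat cmat) \<Rightarrow> (nat \<times> nat) cmat \<Rightarrow> (nat \<times> nat) cmat" where
  "id_tensor E M = (\<lambda>(i, x) (j, y). E (\<lambda>x' y'. M (i, x') (j, y')) x y)"

definition completely_positive :: "nat \<Rightarrow> (nat cmat \<Rightarrow> nat cmat) \<Rightarrow> bool" where
  "completely_positive m E \<longleftrightarrow> (\<forall>k M. psd_on ({..<k} \<times> {..<m}) M \<longrightarrow>
      psd_on ({..<k} \<times> {..<m}) (id_tensor E M))"

definition quantum_channel :: "nat \<Rightarrow> (nat cmat \<Rightarrow> nat cmat) \<Rightarrow> bool" where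
  "quantum_channel m E \<longleftrightarrow> well_defined_on m E \<and> linear_on m E \<and>
      completely_positive m E \<and> trace_preserving m E"

text \<open>Hamiltonian H = \<Sum>x a x |x><x|.\<close>

definition nondegenerate_bohr :: "nat \<Rightarrow> (nat \<Rightarrow> real) \<Rightarrow> bool" where
  "nondegenerate_bohr m a \<longleftrightarrow> (\<forall>x<m. \<forall>y<m. \<forall>x'<m. \<forall>y'<m.
      a x - a y = a x' - a y' \<longleftrightarrow> (x = x' \<and> y = y') \<or> (x = y \<and> x' = y'))"

definition gibbs :: "nat \<Rightarrow> (nat \<Rightarrow> real) \<Rightarrow> real \<Rightarrow> nat cmat" where
  "gibbs m a \<beta> = (\<lambda>x y. if x = y
      then complex_of_real (exp (- \<beta> * a x) / (\<Sum>z<m. exp (- \<beta> * a z))) else 0)"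

text \<open>e^{-iHt} X e^{iHt} in the energy eigenbasis.\<close>
definition evolve :: "(nat \<Rightarrow> real) \<Rightarrow> real \<Rightarrow> nat cmat \<Rightarrow> nat cmat" where
  "evolve a t X = (\<lambda>x y. exp (- \<i> * complex_of_real (t * a x)) * X x y *
                          exp (\<i> * complex_of_real (t * a y)))"

definition GPC :: "nat \<Rightarrow> (nat \<Rightarrow> real) \<Rightarrow> real \<Rightarrow> (nat cmat \<Rightarrow> nat cmat) \<Rightarrow> bool" where
  "GPC m a \<beta> E \<longleftrightarrow> quantum_channel m E \<and>
      mat_eq_on m (E (gibbs m a \<beta>)) (gibbs m a \<beta>) \<and>
      (\<forall>t \<rho>. is_state m \<rho> \<longrightarrow> mat_eq_on m (E (evolve a t \<rho>)) (evolve a t (E \<rho>)))"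

end

theory Submission
  imports Defs
begin

text \<open>If \<open>Q\<close> is positive semidefinite, the Schur multiplier \<open>X \<mapsto> Q \<circ> X\<close> is completely
  positive (Schur product theorem, via a Gram decomposition of \<open>Q\<close>), fixes diagonal matrices,
  commutes with the time evolution and maps \<open>\<rho>\<close> to \<open>\<sigma>\<close>.
  Conversely, covariance forces \<open>E(|k\<rangle>\<langle>l|)\<close> to have its \<open>(x, y)\<close> entry vanish unless the Bohr
  frequencies of \<open>(k, l)\<close> and \<open>(x, y)\<close> agree; for a non-degenerate spectrum this means
  \<open>\<sigma>\<^sub>x\<^sub>y = C\<^sub>x\<^sub>y \<rho>\<^sub>x\<^sub>y\<close> off the diagonal, where \<open>C\<^sub>x\<^sub>y = \<langle>x|E(|x\<rangle>\<langle>y|)|y\<rangle>\<close>.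
  \<open>C\<close> is a principal submatrix of the Choi matrix of \<open>E\<close>, hence positive, and trace preservation
  gives \<open>C\<^sub>x\<^sub>x \<le> 1\<close>, so \<open>Q = C + diag(1 - C\<^sub>x\<^sub>x) \<ge> 0\<close>.\<close>

definition qform :: "'i set \<Rightarrow> 'i cmat \<Rightarrow> ('i \<Rightarrow> complex) \<Rightarrow> complex" where
  "qform S M v = (\<Sum>p\<in>S. \<Sum>q\<in>S. cnj (v p) * M p q * v q)"

lemma psd_on_iff_qform:
  "psd_on S M \<longleftrightarrow> (\<forall>v. Im (qform S M v) = 0 \<and> Re (qform S M v) \<ge> 0)"
  by (simp add: psd_on_def qform_def)

lemma qform_cong:
  assumes "\<And>p q. p \<in> S \<Longrightarrow> q \<in> S \<Longrightarrow> A p q = B p q" "\<And>p. p \<in> S \<Longrightarrow> v p = w p"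
  shows "qform S A v = qform S B w"
  unfolding qform_def using assms by (intro sum.cong refl) auto

lemma qform_add: "qform S (\<lambda>p q. A p q + B p q) v = qform S A v + qform S B v"
  unfolding qform_def by (simp add: algebra_simps sum.distrib)

lemma qform_diagonal:
  assumes "finite S"
  shows "qform S (\<lambda>p q. if p = q then D p else 0) v = (\<Sum>p\<in>S. D p * of_real ((norm (v p))\<^sup>2))"
  unfolding qform_def complex_norm_square
proof (intro sum.cong refl)
  fix p assume "p \<in> S"
  have "(\<Sum>q\<in>S. cnj (v p) * (if p = q then D p else 0) * v q) = (\<Sum>q\<in>S. if q = p then cnj (v p) * D p * v p else 0)"
    by (intro sum.cong refl) auto
  then show "(\<Sum>q\<in>S. cnj (v p) * (if p = q then D p else 0) * v q) = D p * (v p * cnj (v p))"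
    using assms \<open>p \<in> S\<close> by (simp add: algebra_simps)
qed

lemma qform_supported:
  assumes "finite T" "S \<subseteq> T" "\<And>t. t \<in> T - S \<Longrightarrow> v t = 0"
  shows "qform T M v = qform S M v"
proof -
  have "qform T M v = (\<Sum>p\<in>S. \<Sum>q\<in>T. cnj (v p) * M p q * v q)"
    unfolding qform_def using assms by (intro sum.mono_neutral_right) auto
  also have "\<dots> = qform S M v"
    unfolding qform_def using assms by (intro sum.cong refl sum.mono_neutral_right) auto
  finally show ?thesis .
qed

lemma qform_reindex:
  assumes "inj_on f S"
  shows "qform (f ` S) M v = qform S (\<lambda>i j. M (f i) (f j)) (v \<circ> f)"
  unfolding qform_def using assms by (simp add: sum.reindex)

lemma qform_insert:
  assumes "finite S" "n \<notin> S"
  shows "qform (insert n S) Q w = qform S Q w + cnj (w n) * (\<Sum>q\<in>S. Q n q * w q)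
     + (\<Sum>p\<in>S. cnj (w p) * Q p n) * w n + cnj (w n) * Q n n * w n"
  using assms by (simp add: qform_def sum.distrib sum_distrib_left sum_distrib_right algebra_simps)

lemma psd_on_reindex:
  assumes "psd_on T M" "finite T" "inj_on f S" "f ` S \<subseteq> T"
  shows "psd_on S (\<lambda>i j. M (f i) (f j))"
  unfolding psd_on_iff_qform
proof
  fix v :: "_ \<Rightarrow> complex"
  define w where "w t = (if t \<in> f ` S then v (inv_into S f t) else 0)" for t
  have "qform T M w = qform (f ` S) M w"
    using assms(2,4) by (rule qform_supported) (simp add: w_def)
  also have "\<dots> = qform S (\<lambda>i j. M (f i) (f j)) v"
    unfolding qform_reindex[OF assms(3)] using assms(3)
    by (intro qform_cong) (simp_all add: w_def)
  finally show "Im (qform S (\<lambda>i j. M (f i) (f j)) v) = 0 \<and> Re (qform S (\<lambda>i j. M (f i) (f j)) v) \<ge> 0"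
    using assms(1) unfolding psd_on_iff_qform by metis
qed

lemma psd_on_subset:
  assumes "psd_on T M" "finite T" "S \<subseteq> T"
  shows "psd_on S M"
  using psd_on_reindex[OF assms(1,2), of id S] assms(3) by simp

lemma psd_on_diag:
  assumes "psd_on S Q" "finite S" "x \<in> S"
  shows "Im (Q x x) = 0 \<and> Re (Q x x) \<ge> 0"
  using psd_on_subset[OF assms(1,2), of "{x}"] assms(3)
  unfolding psd_on_iff_qform by (auto simp: qform_def dest: spec[of _ "\<lambda>_. 1"])

lemma qform_pair:
  assumes "x \<noteq> p"
  shows "qform {x, p} Q v = cnj (v x) * Q x x * v x + cnj (v x) * Q x p * v p
    + cnj (v p) * Q p x * v x + cnj (v p) * Q p p * v p"
  using assms by (simp add: qform_def)

lemma psd_on_hermitian: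
  assumes "psd_on S Q" "finite S" "x \<in> S" "p \<in> S"
  shows "Q p x = cnj (Q x p)"
proof (cases "x = p")
  case True
  then show ?thesis using psd_on_diag[OF assms(1-3)] by (simp add: complex_eq_iff)
next
  case False
  have diag: "Im (Q x x) = 0" "Im (Q p p) = 0"
    using psd_on_diag[OF assms(1-3)] psd_on_diag[OF assms(1,2,4)] by simp_all
  have "psd_on {x, p} Q" using psd_on_subset[OF assms(1,2)] assms(3,4) by simp
  then have "Im (qform {x, p} Q (\<lambda>_. 1)) = 0" "Im (qform {x, p} Q (\<lambda>q. if q = x then 1 else \<i>)) = 0"
    unfolding psd_on_iff_qform by blast+
  then have "Im (Q x p) + Im (Q p x) = 0" "Re (Q x p) - Re (Q p x) = 0"
    using False diag by (simp_all add: qform_pair)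
  then show ?thesis by (simp add: complex_eq_iff)
qed

lemma psd_on_zero_diag_imp_zero:
  assumes "psd_on S Q" "finite S" "x \<in> S" "p \<in> S" "Q p p = 0"
  shows "Q x p = 0"
proof (cases "x = p")
  case False
  define c where "c = Q x p"
  define r where "r = Re (Q x x)"
  define s where "s = 1 / (r + 1)"
  have r: "Q x x = of_real r" "r \<ge> 0"
    using psd_on_diag[OF assms(1-3)] by (simp_all add: r_def complex_eq_iff)
  have s: "s > 0" "s * r < 1" using r(2) by (simp_all add: s_def field_simps)
  have herm: "Q p x = cnj c" using psd_on_hermitian[OF assms(1-4)] by (simp add: c_def)
  have "psd_on {x, p} Q" using psd_on_subset[OF assms(1,2)] assms(3,4) by simp
  then have "0 \<le> Re (qform {x, p} Q (\<lambda>q. if q = x then - of_real s * c else 1))"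
    unfolding psd_on_iff_qform by blast
  also have "\<dots> = s * (norm c)\<^sup>2 * (s * r - 2)"
    using False assms(5) cmod_power2[of c]
    by (simp add: qform_pair r herm c_def[symmetric] algebra_simps power2_eq_square)
  finally have "(norm c)\<^sup>2 * (s * (s * r - 2)) \<ge> 0" by (simp add: algebra_simps)
  moreover have "s * (s * r - 2) < 0" using s by (simp add: mult_pos_neg)
  ultimately have "\<not> (norm c)\<^sup>2 > 0" using mult_pos_neg[of "(norm c)\<^sup>2" "s * (s * r - 2)"] by linarith
  then show ?thesis by (simp add: c_def)
qed (use assms in simp)

text \<open>When \<open>Q n n = 0\<close> the division yields \<open>0\<close> and this is just the restriction to \<open>S\<close>.\<close>

lemma psd_on_schur_complement:
  assumes "psd_on (insert n S) Q" "finite S" "n \<notin> S"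
  shows "psd_on S (\<lambda>x y. Q x y - Q x n * Q n y / Q n n)"
proof (cases "Q n n = 0")
  case True
  then show ?thesis using psd_on_subset[OF assms(1)] assms(2) by auto
next
  case False
  show ?thesis unfolding psd_on_iff_qform
  proof
    fix v :: "_ \<Rightarrow> complex"
    define d where "d = Q n n"
    define b where "b = (\<Sum>q\<in>S. Q n q * v q)"
    define w where "w = v(n := - b / d)"
    have fin: "finite (insert n S)" using assms(2) by simp
    have d_real: "cnj d = d"
      using psd_on_hermitian[OF assms(1) fin, of n n] by (simp add: d_def)
    have b_cnj: "(\<Sum>p\<in>S. cnj (v p) * Q p n) = cnj b"
      unfolding b_def cnj_sum using psd_on_hermitian[OF assms(1) fin, of n]
      by (intro sum.cong refl) (simp add: mult.commute)
    have "qform S (\<lambda>x y. Q x y - Q x n * Q n y / Q n n) v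
        = qform S Q v - (\<Sum>p\<in>S. \<Sum>q\<in>S. (cnj (v p) * Q p n) * (Q n q * v q)) / d"
      unfolding qform_def d_def
      by (simp add: sum_subtractf sum_divide_distrib algebra_simps)
    also have "\<dots> = qform S Q v - cnj b * b / d"
      unfolding b_cnj[symmetric] unfolding b_def sum_product ..
    also have "\<dots> = qform (insert n S) Q w"
    proof -
      have w_S: "w p = v p" if "p \<in> S" for p using that assms(3) by (auto simp: w_def)
      have "(\<Sum>q\<in>S. Q n q * w q) = b" unfolding b_def using w_S by (intro sum.cong) auto
      moreover have "(\<Sum>p\<in>S. cnj (w p) * Q p n) = cnj b"
        unfolding b_cnj[symmetric] using w_S by (intro sum.cong) auto
      moreover have "qform S Q w = qform S Q v" using w_S by (intro qform_cong) auto
      ultimately have "qform (insert n S) Q w = qform S Q v + cnj (w n) * b + cnj b * w n + cnj (w n) * d * w n"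
        by (simp add: qform_insert[OF assms(2,3)] d_def)
      then show ?thesis using False d_real by (simp add: w_def d_def[symmetric] field_simps)
    qed
    finally have "qform S (\<lambda>x y. Q x y - Q x n * Q n y / Q n n) v = qform (insert n S) Q w" .
    then show "Im (qform S (\<lambda>x y. Q x y - Q x n * Q n y / Q n n) v) = 0
        \<and> Re (qform S (\<lambda>x y. Q x y - Q x n * Q n y / Q n n) v) \<ge> 0"
      using assms(1) unfolding psd_on_iff_qform by metis
  qed
qed

lemma psd_on_gram:
  assumes "psd_on S Q" "finite S"
  shows "\<exists>(L::nat) g. \<forall>x\<in>S. \<forall>y\<in>S. Q x y = (\<Sum>l<L. g l x * cnj (g l y))"
  using assms(2,1)
proof (induction S arbitrary: Q rule: finite_induct)
  case (insert n S)
  let ?R = "\<lambda>x y. Q x y - Q x n * Q n y / Q n n"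
  obtain L :: nat and g where g: "\<forall>x\<in>S. \<forall>y\<in>S. ?R x y = (\<Sum>l<L. g l x * cnj (g l y))"
    using insert.IH[OF psd_on_schur_complement[OF insert.prems insert.hyps(1,2)]] by blast
  have fin: "finite (insert n S)" using insert.hyps(1) by simp
  have herm: "Q n x = cnj (Q x n)" if "x \<in> insert n S" for x
    using psd_on_hermitian[OF insert.prems fin that] by simp
  have R_n: "?R x n = 0 \<and> ?R n x = 0" if "x \<in> insert n S" for x
  proof (cases "Q n n = 0")
    case True
    then have "Q x n = 0" using psd_on_zero_diag_imp_zero[OF insert.prems fin that] by simp
    then show ?thesis using herm[OF that] True by simp
  qed simp
  define sq where "sq = complex_of_real (sqrt (Re (Q n n)))"
  have sq: "sq * cnj sq = Q n n"
    using psd_on_diag[OF insert.prems fin, of n]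
    by (auto simp: sq_def complex_eq_iff simp flip: of_real_mult)
  define g' where "g' l x = (if l < L then if x \<in> S then g l x else 0 else Q x n / sq)" for l x
  have "Q x y = (\<Sum>l<Suc L. g' l x * cnj (g' l y))" if xy: "x \<in> insert n S" "y \<in> insert n S" for x y
  proof -
    have "(\<Sum>l<L. g' l x * cnj (g' l y)) = ?R x y"
      using g xy R_n insert.hyps(2) by (auto simp: g'_def)
    moreover have "g' L x * cnj (g' L y) = Q x n * Q n y / Q n n"
      using herm[OF xy(2)] by (simp add: g'_def sq[symmetric])
    ultimately show ?thesis by simp
  qed
  then show ?case by blast
qed simp

lemma psd_on_rank_one:
  assumes "c \<ge> 0"
  shows "psd_on S (\<lambda>p q. complex_of_real c * (f p * cnj (f q)))"
  unfolding psd_on_iff_qform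
proof
  fix v
  define z where "z = (\<Sum>p\<in>S. cnj (v p) * f p)"
  have cnj_z: "cnj z = (\<Sum>q\<in>S. cnj (f q) * v q)"
    unfolding z_def cnj_sum by (simp add: mult.commute)
  have "qform S (\<lambda>p q. complex_of_real c * (f p * cnj (f q))) v = of_real c * (z * cnj z)"
    unfolding cnj_z unfolding z_def sum_product unfolding qform_def sum_distrib_left
    by (intro sum.cong refl) (simp add: algebra_simps)
  also have "\<dots> = of_real (c * (norm z)\<^sup>2)" by (simp only: of_real_mult complex_norm_square)
  finally show "Im (qform S (\<lambda>p q. complex_of_real c * (f p * cnj (f q))) v) = 0 \<and>
      0 \<le> Re (qform S (\<lambda>p q. complex_of_real c * (f p * cnj (f q))) v)"
    using assms by simp
qed

lemma psd_on_add:
  assumes "psd_on S A" "psd_on S B"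
  shows "psd_on S (\<lambda>p q. A p q + B p q)"
  using assms unfolding psd_on_iff_qform qform_add by simp

lemma psd_on_diagonal:
  assumes "finite S" "\<And>p. p \<in> S \<Longrightarrow> Im (D p) = 0 \<and> Re (D p) \<ge> 0"
  shows "psd_on S (\<lambda>p q. if p = q then D p else 0)"
  unfolding psd_on_iff_qform qform_diagonal[OF assms(1)] Im_sum Re_sum
  using assms(2) by (auto intro: sum_nonneg)

lemma psd_on_schur_product:
  assumes "psd_on S Q" "finite S" "psd_on T M" "f ` T \<subseteq> S"
  shows "psd_on T (\<lambda>p q. Q (f p) (f q) * M p q)"
  unfolding psd_on_iff_qform
proof
  fix w :: "_ \<Rightarrow> complex"
  obtain L :: nat and g where g: "\<forall>x\<in>S. \<forall>y\<in>S. Q x y = (\<Sum>l<L. g l x * cnj (g l y))"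
    using psd_on_gram[OF assms(1,2)] by blast
  have gf: "Q (f p) (f q) = (\<Sum>l<L. g l (f p) * cnj (g l (f q)))" if "p \<in> T" "q \<in> T" for p q
    using g assms(4) that by (auto simp: image_subset_iff)
  have "qform T (\<lambda>p q. Q (f p) (f q) * M p q) w
      = (\<Sum>p\<in>T. \<Sum>q\<in>T. \<Sum>l<L. cnj (w p * cnj (g l (f p))) * M p q * (w q * cnj (g l (f q))))"
    unfolding qform_def
    by (intro sum.cong refl) (simp add: gf sum_distrib_left sum_distrib_right algebra_simps)
  also have "\<dots> = (\<Sum>p\<in>T. \<Sum>l<L. \<Sum>q\<in>T. cnj (w p * cnj (g l (f p))) * M p q * (w q * cnj (g l (f q))))"
    by (intro sum.cong refl sum.swap)
  also have "\<dots> = (\<Sum>l<L. qform T M (\<lambda>p. w p * cnj (g l (f p))))"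
    unfolding qform_def by (rule sum.swap)
  finally have e: "qform T (\<lambda>p q. Q (f p) (f q) * M p q) w = (\<Sum>l<L. qform T M (\<lambda>p. w p * cnj (g l (f p))))" .
  show "Im (qform T (\<lambda>p q. Q (f p) (f q) * M p q) w) = 0 \<and> 0 \<le> Re (qform T (\<lambda>p q. Q (f p) (f q) * M p q) w)"
    using assms(3) unfolding e psd_on_iff_qform by (simp add: sum_nonneg)
qed

lemma psd_on_cong:
  assumes "\<And>p q. p \<in> S \<Longrightarrow> q \<in> S \<Longrightarrow> A p q = B p q"
  shows "psd_on S A \<longleftrightarrow> psd_on S B"
proof -
  have "qform S A v = qform S B v" for v using assms by (intro qform_cong) auto
  then show ?thesis unfolding psd_on_iff_qform by simp
qed

definition ketbra :: "nat \<Rightarrow> nat \<Rightarrow> nat cmat" where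
  "ketbra i j = (\<lambda>x y. if x = i \<and> y = j then 1 else 0)"

definition covariant_on :: "nat \<Rightarrow> (nat \<Rightarrow> real) \<Rightarrow> (nat cmat \<Rightarrow> nat cmat) \<Rightarrow> nat cmat \<Rightarrow> bool" where
  "covariant_on m a E X \<longleftrightarrow> (\<forall>t. mat_eq_on m (E (evolve a t X)) (evolve a t (E X)))"

lemma linear_onD:
  "linear_on m E \<Longrightarrow> mat_eq_on m (E (\<lambda>i j. a * X i j + b * Y i j)) (\<lambda>i j. a * E X i j + b * E Y i j)"
  by (simp add: linear_on_def)

lemma linear_on_sum:
  assumes "linear_on m E" "finite I"
  shows "mat_eq_on m (E (\<lambda>i j. \<Sum>k\<in>I. c k * X k i j)) (\<lambda>i j. \<Sum>k\<in>I. c k * E (X k) i j)"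
  using assms(2)
proof (induction I rule: finite_induct)
  case empty
  show ?case using linear_onD[OF assms(1), of 0 "\<lambda>_ _. 0" 0 "\<lambda>_ _. 0"] by simp
next
  case (insert k I)
  have "mat_eq_on m (E (\<lambda>i j. c k * X k i j + 1 * (\<Sum>k\<in>I. c k * X k i j)))
      (\<lambda>i j. c k * E (X k) i j + 1 * E (\<lambda>i j. \<Sum>k\<in>I. c k * X k i j) i j)"
    by (rule linear_onD[OF assms(1)])
  then show ?case using insert unfolding mat_eq_on_def by simp
qed

lemma channel_entry_expansion:
  assumes "well_defined_on m E" "linear_on m E" "x < m" "y < m"
  shows "E X x y = (\<Sum>(k, l)\<in>{..<m} \<times> {..<m}. X k l * E (ketbra k l) x y)"
proof -
  let ?K = "{..<m} \<times> {..<m}"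
  have "(\<Sum>p\<in>?K. X (fst p) (snd p) * ketbra (fst p) (snd p) i j) = X i j" if "i < m" "j < m" for i j
  proof -
    have "(\<Sum>p\<in>?K. X (fst p) (snd p) * ketbra (fst p) (snd p) i j) = (\<Sum>p\<in>?K. if p = (i, j) then X i j else 0)"
      unfolding ketbra_def by (intro sum.cong) auto
    then show ?thesis using that by simp
  qed
  then have "mat_eq_on m X (\<lambda>i j. \<Sum>p\<in>?K. X (fst p) (snd p) * ketbra (fst p) (snd p) i j)"
    unfolding mat_eq_on_def by simp
  then have "mat_eq_on m (E X) (E (\<lambda>i j. \<Sum>p\<in>?K. X (fst p) (snd p) * ketbra (fst p) (snd p) i j))"
    using assms(1) unfolding well_defined_on_def by blast
  moreover have "mat_eq_on m (E (\<lambda>i j. \<Sum>p\<in>?K. X (fst p) (snd p) * ketbra (fst p) (snd p) i j))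
      (\<lambda>i j. \<Sum>p\<in>?K. X (fst p) (snd p) * E (ketbra (fst p) (snd p)) i j)"
    using linear_on_sum[OF assms(2), of ?K "\<lambda>p. X (fst p) (snd p)" "\<lambda>p. ketbra (fst p) (snd p)"] by simp
  ultimately show ?thesis using assms(3,4) unfolding mat_eq_on_def by (simp add: case_prod_beta)
qed

lemma evolve_entry: "evolve a t X x y = cis (t * (a y - a x)) * X x y"
  unfolding evolve_def cis_conv_exp by (simp add: exp_diff exp_minus field_simps right_diff_distrib)

lemma covariant_on_lincomb:
  assumes "linear_on m E" "covariant_on m a E X" "covariant_on m a E Y"
  shows "covariant_on m a E (\<lambda>i j. c * X i j + d * Y i j)"
  unfolding covariant_on_def
proof
  fix t
  have "evolve a t (\<lambda>i j. c * X i j + d * Y i j) = (\<lambda>i j. c * evolve a t X i j + d * evolve a t Y i j)"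
    by (intro ext) (simp add: evolve_entry algebra_simps)
  then show "mat_eq_on m (E (evolve a t (\<lambda>i j. c * X i j + d * Y i j))) (evolve a t (E (\<lambda>i j. c * X i j + d * Y i j)))"
    using linear_onD[OF assms(1), of c "evolve a t X" d "evolve a t Y"] linear_onD[OF assms(1), of c X d Y]
      assms(2,3)
    unfolding covariant_on_def mat_eq_on_def by (simp add: evolve_entry algebra_simps)
qed

lemma is_state_rank_one:
  assumes "c \<ge> 0" "of_real c * (\<Sum>p<m. f p * cnj (f p)) = 1"
  shows "is_state m (\<lambda>p q. complex_of_real c * (f p * cnj (f q)))"
  unfolding is_state_def using psd_on_rank_one[OF assms(1)] assms(2) by (simp add: sum_distrib_left)

lemma is_state_equal_superposition:
  assumes "x < m" "y < m" "x \<noteq> y" "\<And>p. h p * cnj (h p) = (if p = x \<or> p = y then 1 else 0)"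
  shows "is_state m (\<lambda>p q. complex_of_real (1/2) * (h p * cnj (h q)))"
proof (rule is_state_rank_one)
  have "(\<Sum>p<m. h p * cnj (h p)) = (\<Sum>p\<in>{p \<in> {..<m}. p = x \<or> p = y}. 1)"
    unfolding assms(4) by (rule sum.inter_filter[symmetric]) simp
  also have "{p \<in> {..<m}. p = x \<or> p = y} = {x, y}" using assms(1,2) by auto
  finally show "complex_of_real (1/2) * (\<Sum>p<m. h p * cnj (h p)) = 1" using assms(3) by simp
qed simp

text \<open>Covariance is only assumed on states, but the states \<open>|i\<rangle>\<langle>i|\<close>,
  \<open>(|x\<rangle> + |y\<rangle>)(\<langle>x| + \<langle>y|)/2\<close> and \<open>(|x\<rangle> + \<i>|y\<rangle>)(\<langle>x| - \<i>\<langle>y|)/2\<close> span every \<open>|x\<rangle>\<langle>y|\<close>.\<close>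

lemma GPC_covariant_on_ketbra:
  assumes "GPC m a \<beta> E" "x < m" "y < m"
  shows "covariant_on m a E (ketbra x y)"
proof -
  have lin: "linear_on m E" using assms(1) unfolding GPC_def quantum_channel_def by blast
  have on_states: "covariant_on m a E X" if "is_state m X" for X
    using assms(1) that unfolding GPC_def covariant_on_def by blast
  have diag: "covariant_on m a E (ketbra z z)" if "z < m" for z
  proof -
    define f where "f p = (if p = z then 1 else 0 :: complex)" for p
    have "ketbra z z = (\<lambda>p q. complex_of_real 1 * (f p * cnj (f q)))"
      unfolding ketbra_def f_def by (intro ext) simp
    moreover have "of_real 1 * (\<Sum>p<m. f p * cnj (f p)) = 1"
      using that by (simp add: f_def if_distrib[of "\<lambda>u. u * _"] cong: if_cong)
    ultimately show ?thesis using on_states is_state_rank_one[where c=1 and f=f and m=m] by simp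
  qed
  show ?thesis
  proof (cases "x = y")
    case True
    then show ?thesis using diag assms(2) by simp
  next
    case False
    define h1 where "h1 p = (if p = x \<or> p = y then 1 else 0 :: complex)" for p
    define h2 where "h2 p = (if p = x then 1 else if p = y then \<i> else 0)" for p
    define P1 where "P1 p q = complex_of_real (1/2) * (h1 p * cnj (h1 q))" for p q
    define P2 where "P2 p q = complex_of_real (1/2) * (h2 p * cnj (h2 q))" for p q
    have "covariant_on m a E P1"
      unfolding P1_def by (rule on_states[OF is_state_equal_superposition[OF assms(2,3) False]])
        (simp add: h1_def)
    moreover have "covariant_on m a E P2"
      unfolding P2_def by (rule on_states[OF is_state_equal_superposition[OF assms(2,3) False]])
        (simp add: h2_def)
    ultimately have c12: "covariant_on m a E (\<lambda>i j. 1 * P1 i j + \<i> * P2 i j)"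
      by (intro covariant_on_lincomb[OF lin])
    have cd: "covariant_on m a E (\<lambda>i j. 1 * ketbra x x i j + 1 * ketbra y y i j)"
      using diag assms(2,3) by (intro covariant_on_lincomb[OF lin]) auto
    have eq: "ketbra x y = (\<lambda>i j. 1 * (\<lambda>i j. 1 * P1 i j + \<i> * P2 i j) i j
        + (- (1 + \<i>) / 2) * (\<lambda>i j. 1 * ketbra x x i j + 1 * ketbra y y i j) i j)"
      using False unfolding ketbra_def P1_def P2_def h1_def h2_def by (intro ext) (auto simp: field_simps)
    show ?thesis unfolding eq by (rule covariant_on_lincomb[OF lin c12 cd])
  qed
qed

text \<open>Covariance makes \<open>E(|k\<rangle>\<langle>l|)\<close> rotate with the Bohr frequency of \<open>(k, l)\<close> and its
  \<open>(x, y)\<close> entry with that of \<open>(x, y)\<close>; at the time where the two phases are opposite the entry must vanish.\<close>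

lemma covariant_on_ketbra_entry_eq_0:
  assumes "linear_on m E" "covariant_on m a E (ketbra k l)" "x < m" "y < m"
    and "a k - a l \<noteq> a x - a y"
  shows "E (ketbra k l) x y = 0"
proof -
  define e where "e = E (ketbra k l) x y"
  define u where "u = (a k - a l) - (a x - a y)"
  define t where "t = pi / u"
  have "evolve a t (ketbra k l) = (\<lambda>i j. cis (t * (a l - a k)) * ketbra k l i j + 0 * ketbra k l i j)"
    by (intro ext) (simp add: evolve_entry ketbra_def)
  then have "E (evolve a t (ketbra k l)) x y = cis (t * (a l - a k)) * e"
    using linear_onD[OF assms(1), of "cis (t * (a l - a k))" "ketbra k l" 0 "ketbra k l"] assms(3,4)
    unfolding mat_eq_on_def e_def by simp
  moreover have "E (evolve a t (ketbra k l)) x y = cis (t * (a y - a x)) * e"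
    using assms(2-4) unfolding covariant_on_def mat_eq_on_def e_def by (simp add: evolve_entry)
  ultimately have "cis (t * (a l - a k)) * e = cis (t * (a y - a x)) * e" by metis
  moreover have "cis (t * (a y - a x)) = - cis (t * (a l - a k))"
  proof -
    have "t * (a y - a x) = t * (a l - a k) + pi"
      using assms(5) by (simp add: t_def u_def field_simps)
    then show ?thesis by (simp add: cis_mult[symmetric])
  qed
  ultimately have "2 * cis (t * (a l - a k)) * e = 0" by simp
  then show ?thesis by (simp add: e_def)
qed

lemma GPC_offdiag_entry:
  assumes "nondegenerate_bohr m a" "GPC m a \<beta> E" "x < m" "y < m" "x \<noteq> y"
  shows "E X x y = X x y * E (ketbra x y) x y"
proof -
  have wd: "well_defined_on m E" and lin: "linear_on m E"
    using assms(2) unfolding GPC_def quantum_channel_def by blast+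
  have "E X x y = (\<Sum>(k, l)\<in>{..<m} \<times> {..<m}. X k l * E (ketbra k l) x y)"
    by (rule channel_entry_expansion[OF wd lin assms(3,4)])
  also have "\<dots> = (\<Sum>p\<in>{..<m} \<times> {..<m}. if p = (x, y) then X x y * E (ketbra x y) x y else 0)"
  proof (intro sum.cong refl, clarify)
    fix k l assume kl: "k < m" "l < m"
    have "a k - a l \<noteq> a x - a y" if "(k, l) \<noteq> (x, y)"
      using assms(1) kl assms(3-5) that unfolding nondegenerate_bohr_def by blast
    then show "X k l * E (ketbra k l) x y = (if (k, l) = (x, y) then X x y * E (ketbra x y) x y else 0)"
      using covariant_on_ketbra_entry_eq_0[OF lin GPC_covariant_on_ketbra[OF assms(2) kl] assms(3,4)] by auto
  qed
  also have "\<dots> = X x y * E (ketbra x y) x y" using assms(3,4) by simp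
  finally show ?thesis .
qed

lemma completely_positive_choi:
  assumes "completely_positive m E"
  shows "psd_on ({..<m} \<times> {..<m}) (\<lambda>(i, x) (j, y). E (ketbra i j) x y)"
proof -
  define f where "f p = (if fst p = snd p then 1 else 0 :: complex)" for p :: "nat \<times> nat"
  define M where "M p q = complex_of_real 1 * (f p * cnj (f q))" for p q
  have "psd_on ({..<m} \<times> {..<m}) M" unfolding M_def by (rule psd_on_rank_one) simp
  then have "psd_on ({..<m} \<times> {..<m}) (id_tensor E M)"
    using assms unfolding completely_positive_def by blast
  moreover have "(\<lambda>x' y'. M (i, x') (j, y')) = ketbra i j" for i j
    unfolding M_def f_def ketbra_def by (intro ext) auto
  ultimately show ?thesis by (simp add: id_tensor_def)
qed

definition schur_mult :: "'i cmat \<Rightarrow> 'i cmat \<Rightarrow> 'i cmat" where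
  "schur_mult Q X = (\<lambda>x y. Q x y * X x y)"

lemma GPC_schur_mult:
  assumes "psd_on {..<m} Q" "\<forall>x<m. Q x x = 1"
  shows "GPC m a \<beta> (schur_mult Q)"
proof -
  have "completely_positive m (schur_mult Q)"
    unfolding completely_positive_def
  proof (intro allI impI)
    fix k :: nat and M :: "(nat \<times> nat) cmat"
    assume "psd_on ({..<k} \<times> {..<m}) M"
    then have "psd_on ({..<k} \<times> {..<m}) (\<lambda>p q. Q (snd p) (snd q) * M p q)"
      by (rule psd_on_schur_product[OF assms(1) finite_lessThan]) auto
    moreover have "id_tensor (schur_mult Q) M = (\<lambda>p q. Q (snd p) (snd q) * M p q)"
      unfolding id_tensor_def schur_mult_def by (intro ext) (auto split: prod.split)
    ultimately show "psd_on ({..<k} \<times> {..<m}) (id_tensor (schur_mult Q) M)" by simp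
  qed
  moreover have "schur_mult Q (evolve a t X) = evolve a t (schur_mult Q X)" for t X
    unfolding schur_mult_def by (intro ext) (simp add: evolve_entry algebra_simps)
  ultimately show ?thesis
    using assms(2)
    unfolding GPC_def quantum_channel_def well_defined_on_def linear_on_def trace_preserving_def
    by (simp add: mat_eq_on_def schur_mult_def gibbs_def algebra_simps)
qed

lemma GPC_imp_psd_ratio:
  assumes "nondegenerate_bohr m a" "\<forall>x<m. \<forall>y<m. \<rho> x y \<noteq> 0"
    and "GPC m a \<beta> E" "mat_eq_on m (E \<rho>) \<sigma>"
  shows "psd_on {..<m} (\<lambda>x y. if x = y then 1 else \<sigma> x y / \<rho> x y)"
proof -
  have cp: "completely_positive m E" and tp: "trace_preserving m E"
    using assms(3) unfolding GPC_def quantum_channel_def by blast+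
  define C where "C = (\<lambda>i j. E (ketbra i j) i j)"
  have choi: "psd_on ({..<m} \<times> {..<m}) (\<lambda>(i, x) (j, y). E (ketbra i j) x y)"
    by (rule completely_positive_choi[OF cp])
  have "psd_on {..<m} C"
    unfolding C_def using psd_on_reindex[OF choi _, of "\<lambda>i. (i, i)" "{..<m}"] by (auto simp: inj_on_def)
  moreover have "Im (C i i) = 0 \<and> Re (C i i) \<le> 1" if "i < m" for i
  proof -
    have pos: "Im (E (ketbra i i) x x) = 0 \<and> Re (E (ketbra i i) x x) \<ge> 0" if "x < m" for x
      using psd_on_diag[OF choi, of "(i, x)"] \<open>i < m\<close> that by simp
    have "(\<Sum>x<m. E (ketbra i i) x x) = 1"
      using tp that unfolding trace_preserving_def by (simp add: ketbra_def)
    then have "(\<Sum>x<m. Re (E (ketbra i i) x x)) = 1" by (metis Re_sum one_complex.sel)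
    moreover have "Re (C i i) \<le> (\<Sum>x<m. Re (E (ketbra i i) x x))"
      unfolding C_def by (rule member_le_sum) (use pos that in auto)
    ultimately show ?thesis using pos that by (simp add: C_def)
  qed
  ultimately have "psd_on {..<m} (\<lambda>x y. C x y + (if x = y then 1 - C x x else 0))"
    by (intro psd_on_add psd_on_diagonal) auto
  moreover have "\<sigma> x y / \<rho> x y = C x y" if "x < m" "y < m" "x \<noteq> y" for x y
    using GPC_offdiag_entry[OF assms(1,3) that, of \<rho>] assms(2,4) that
    unfolding mat_eq_on_def C_def by simp
  ultimately show ?thesis by (subst psd_on_cong) auto
qed

theorem theorem4:
  fixes m :: nat and a :: "nat \<Rightarrow> real" and \<beta> :: real and \<rho> \<sigma> :: "nat cmat"
  assumes "\<beta> > 0"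
    and "nondegenerate_bohr m a"
    and "is_state m \<rho>" and "is_state m \<sigma>"
    and "\<forall>x<m. \<forall>y<m. \<rho> x y \<noteq> 0"
    and "\<forall>x<m. \<rho> x x = \<sigma> x x"
  shows "(\<exists>E. GPC m a \<beta> E \<and> mat_eq_on m (E \<rho>) \<sigma>) \<longleftrightarrow>
         psd_on {..<m} (\<lambda>x y. if x = y then 1 else \<sigma> x y / \<rho> x y)"
proof
  assume "\<exists>E. GPC m a \<beta> E \<and> mat_eq_on m (E \<rho>) \<sigma>"
  then show "psd_on {..<m} (\<lambda>x y. if x = y then 1 else \<sigma> x y / \<rho> x y)"
    using GPC_imp_psd_ratio[OF assms(2,5)] by blast
next
  let ?Q = "\<lambda>x y. if x = y then 1 else \<sigma> x y / \<rho> x y"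
  assume "psd_on {..<m} ?Q"
  then have "GPC m a \<beta> (schur_mult ?Q)" by (rule GPC_schur_mult) simp
  moreover have "mat_eq_on m (schur_mult ?Q \<rho>) \<sigma>"
    using assms(5,6) by (simp add: mat_eq_on_def schur_mult_def)
  ultimately show "\<exists>E. GPC m a \<beta> E \<and> mat_eq_on m (E \<rho>) \<sigma>" by blast
qed

end
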